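(* Let $0<\varpi<2$ and $0\le\beta_e\le1$. Let $X$ be binary with distribution $(p,1-p)$ and let $Y$ be the ternary output of the binary erasure channel $$p(y\mid x)=\begin{pmatrix}1-\beta_e&0&\beta_e\\ 0&1-\beta_e&\beta_e\end{pmatrix}.$$ Then the message importance loss capacity is $$C(\varpi,\beta_e)=\max_{p\in[0,1]}\big\{L(\varpi,X)-L(\varpi,X\mid Y)\big\}=(1-\beta_e)\big(e^{\varpi/2}-1\big),$$ attained at $p=1/2$.
   Context: For a discrete random variable $X$ with distribution $\{p(x_1),\dots,p(x_n)\}$ the message importance measure (MIM) is $L(\varpi,X)=\sum_i p(x_i)e^{\varpi(1-p(x_i))}$. For a pair $(X,Y)$ with joint law $p(x_i)p(y_j\mid x_i)$, $p(y_j)=\sum_i p(x_i)p(y_j\mid x_i)$ and $p(x_i\mid y_j)=p(x_i)p(y_j\mid x_i)/p(y_j)$, the conditional message importance measure (CMIM) is $L(\varpi,X\mid Y)=\sum_{j:\,p(y_j)>0} p(y_j)\sum_i p(x_i\mid y_j)e^{\varpi(1-p(x_i\mid y_j))}$. For a fixed transition matrix $p(y\mid x)$, the message importance loss capacity (MILC) is $C=\max_{p(x)}\{L(\varpi,X)-L(\varpi,X\mid Y)\}$. *)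

theory Defs
  imports Complex_Main
begin

definition MIM :: "real \<Rightarrow> ('a \<Rightarrow> real) \<Rightarrow> 'a set \<Rightarrow> real" where
  "MIM w px A = (\<Sum>x\<in>A. px x * exp (w * (1 - px x)))"

definition out_prob :: "('a \<Rightarrow> real) \<Rightarrow> ('a \<Rightarrow> 'b \<Rightarrow> real) \<Rightarrow> 'a set \<Rightarrow> 'b \<Rightarrow> real" where
  "out_prob px W A y = (\<Sum>x\<in>A. px x * W x y)"

definition CMIM :: "real \<Rightarrow> ('a \<Rightarrow> real) \<Rightarrow> ('a \<Rightarrow> 'b \<Rightarrow> real) \<Rightarrow> 'a set \<Rightarrow> 'b set \<Rightarrow> real" where
  "CMIM w px W A B =
     (\<Sum>y\<in>{y\<in>B. out_prob px W A y > 0}.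
        out_prob px W A y *
        (\<Sum>x\<in>A. (px x * W x y / out_prob px W A y) *
                  exp (w * (1 - px x * W x y / out_prob px W A y))))"

definition is_dist :: "('a \<Rightarrow> real) \<Rightarrow> 'a set \<Rightarrow> bool" where
  "is_dist px A \<longleftrightarrow> (\<forall>x\<in>A. 0 \<le> px x) \<and> (\<Sum>x\<in>A. px x) = 1"

definition MILC :: "real \<Rightarrow> ('a \<Rightarrow> 'b \<Rightarrow> real) \<Rightarrow> 'a set \<Rightarrow> 'b set \<Rightarrow> real" where
  "MILC w W A B = Sup {MIM w px A - CMIM w px W A B | px. is_dist px A}"

text \<open>Binary erasure channel: inputs {0,1}, outputs {0,1,2} with 2 = erasure.\<close>
definition BEC :: "real \<Rightarrow> nat \<Rightarrow> nat \<Rightarrow> real" where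
  "BEC \<beta> x y = (if y = 2 then \<beta> else if y = x then 1 - \<beta> else 0)"

definition bin_dist :: "real \<Rightarrow> nat \<Rightarrow> real" where
  "bin_dist p x = (if x = 0 then p else 1 - p)"

end

theory Submission imports Defs begin

text \<open>
  The erasure channel either delivers the input symbol exactly, which leaves no importance,
  or erases it, which leaves the whole prior importance; hence
  \<open>L(\<varpi>,X|Y) = (1-\<beta>) + \<beta> L(\<varpi>,X)\<close> and the loss is \<open>(1-\<beta>)(L(\<varpi>,X) - 1)\<close>.
  It remains to bound the binary MIM \<open>p exp(\<varpi>(1-p)) + (1-p) exp(\<varpi>p)\<close> by its value
  \<open>exp(\<varpi>/2)\<close> at \<open>p = 1/2\<close>. Writing \<open>p = 1/2 + t\<close> and \<open>a = exp(\<varpi>t)\<close>, this reduces to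
  \<open>(a-1)\<^sup>2 \<le> 2t(a\<^sup>2-1)\<close>, which follows from \<open>tanh(s/2) \<le> s\<close> for \<open>s = \<varpi>t \<ge> 0\<close>
  (and its mirror image for \<open>s \<le> 0\<close>) together with \<open>\<varpi> \<le> 2\<close>.
\<close>

lemma exp_minus_one_sign:
  fixes s :: real
  shows "(exp s - 1) * (exp s - 1 - s * (exp s + 1)) \<le> 0"
proof (cases "s \<ge> 0")
  case True
  have "exp s - 1 \<le> s * exp s"
    using exp_ge_add_one_self[of "-s"] by (simp add: exp_minus field_simps)
  also have "\<dots> \<le> s * (exp s + 1)"
    using True by (simp add: distrib_left)
  finally show ?thesis
    using True by (simp add: mult_nonneg_nonpos)
next
  case False
  have "1 - exp s \<le> - s"
    using exp_ge_add_one_self[of s] by linarith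
  also have "\<dots> \<le> - s * (exp s + 1)"
    using False mult_nonpos_nonneg[of s "exp s"] by (simp add: distrib_left)
  finally show ?thesis
    using False by (simp add: mult_nonpos_nonneg)
qed

lemma binary_importance_le:
  fixes w p :: real
  assumes "0 \<le> w" "w \<le> 2"
  shows "p * exp (w * (1 - p)) + (1 - p) * exp (w * p) \<le> exp (w / 2)"
proof -
  define t where "t = p - 1/2"
  define a where "a = exp (w * t)"
  have a_pos: "a > 0"
    unfolding a_def by simp
  have "0 \<le> t * (a - 1)"
  proof (cases "t \<ge> 0")
    case True
    then have "a \<ge> 1"
      using assms(1) by (simp add: a_def)
    with True show ?thesis by simp
  next
    case False
    then have "a \<le> 1"
      using assms(1) by (simp add: a_def mult_nonneg_nonpos)
    with False show ?thesis by (simp add: mult_nonpos_nonpos)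
  qed
  then have same_sign: "0 \<le> t * ((a - 1) * (a + 1))"
    using a_pos by (simp add: mult.assoc[symmetric])
  have "(a - 1) * (a - 1) \<le> w * t * ((a - 1) * (a + 1))"
    using exp_minus_one_sign[of "w * t"] unfolding a_def[symmetric] by (simp add: algebra_simps)
  also have "\<dots> \<le> 2 * t * ((a - 1) * (a + 1))"
    using mult_right_mono[OF assms(2) same_sign] by (simp add: mult.assoc)
  finally have "p + (1 - p) * a * a \<le> a"
    unfolding t_def by (simp add: algebra_simps)
  then have "p / a + (1 - p) * a \<le> 1"
    using a_pos by (simp add: field_simps)
  then have "exp (w / 2) * (p / a + (1 - p) * a) \<le> exp (w / 2)"
    by simp
  moreover have "exp (w * (1 - p)) = exp (w / 2) / a" "exp (w * p) = exp (w / 2) * a"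
    unfolding a_def t_def by (simp_all add: exp_diff[symmetric] exp_add[symmetric] algebra_simps)
  ultimately show ?thesis
    by (simp add: algebra_simps)
qed

lemma MIM_binary_le:
  assumes "0 \<le> w" "w \<le> 2" "is_dist px {0::nat, 1}"
  shows "MIM w px {0, 1} \<le> exp (w / 2)"
proof -
  have "px 1 = 1 - px 0"
    using assms(3) by (simp add: is_dist_def)
  then show ?thesis
    using binary_importance_le[OF assms(1,2), of "px 0"] by (simp add: MIM_def)
qed

lemma sum_three: "(\<Sum>y\<in>{0::nat, 1, 2}. f y) = f 0 + f 1 + f 2"
  by (simp add: add.assoc)

lemma CMIM_BEC:
  fixes \<beta> :: real
  assumes "0 \<le> \<beta>" "\<beta> \<le> 1" "is_dist px {0::nat, 1}"
  shows "CMIM w px (BEC \<beta>) {0, 1} {0, 1, 2} = (1 - \<beta>) + \<beta> * MIM w px {0, 1}"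
proof -
  have nonneg: "px 0 \<ge> 0" "px 1 \<ge> 0" and total: "px 0 + px 1 = 1"
    using assms(3) by (auto simp: is_dist_def)
  let ?q = "out_prob px (BEC \<beta>) {0, 1}"
  let ?term = "\<lambda>y. if ?q y > 0 then ?q y * (\<Sum>x\<in>{0, 1}. (px x * BEC \<beta> x y / ?q y) *
                     exp (w * (1 - px x * BEC \<beta> x y / ?q y))) else 0"
  have "?q 0 = px 0 * (1 - \<beta>)" "?q 1 = px 1 * (1 - \<beta>)" "?q 2 = \<beta>"
    using total by (simp_all add: out_prob_def BEC_def flip: distrib_right)
  then have term_0: "?term 0 = px 0 * (1 - \<beta>)" and term_1: "?term 1 = px 1 * (1 - \<beta>)"
    and term_2: "?term 2 = \<beta> * MIM w px {0, 1}"
    using nonneg assms(1,2) by (auto simp: BEC_def MIM_def)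
  have "CMIM w px (BEC \<beta>) {0, 1} {0, 1, 2} = (\<Sum>y\<in>{0, 1, 2}. ?term y)"
    unfolding CMIM_def by (rule sum.inter_filter) simp
  also have "\<dots> = ?term 0 + ?term 1 + ?term 2"
    by (rule sum_three)
  also have "\<dots> = (px 0 + px 1) * (1 - \<beta>) + \<beta> * MIM w px {0, 1}"
    unfolding term_0 term_1 term_2 by (simp add: algebra_simps)
  finally show ?thesis
    using total by simp
qed

lemma importance_loss_BEC:
  fixes \<beta> :: real
  assumes "0 \<le> \<beta>" "\<beta> \<le> 1" "is_dist px {0::nat, 1}"
  shows "MIM w px {0, 1} - CMIM w px (BEC \<beta>) {0, 1} {0, 1, 2} = (1 - \<beta>) * (MIM w px {0, 1} - 1)"
  using CMIM_BEC[OF assms] by (simp add: algebra_simps)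

lemma importance_loss_BEC_le:
  fixes \<beta> :: real
  assumes "0 \<le> w" "w \<le> 2" "0 \<le> \<beta>" "\<beta> \<le> 1" "is_dist px {0::nat, 1}"
  shows "MIM w px {0, 1} - CMIM w px (BEC \<beta>) {0, 1} {0, 1, 2} \<le> (1 - \<beta>) * (exp (w / 2) - 1)"
  using importance_loss_BEC[OF assms(3-5)] MIM_binary_le[OF assms(1,2,5)] assms(4)
  by (simp add: mult_left_mono)

lemma is_dist_bin_dist: "0 \<le> p \<Longrightarrow> p \<le> 1 \<Longrightarrow> is_dist (bin_dist p) {0, 1}"
  by (simp add: is_dist_def bin_dist_def)

lemma importance_loss_BEC_uniform:
  fixes \<beta> :: real
  assumes "0 \<le> \<beta>" "\<beta> \<le> 1"
  shows "MIM w (bin_dist (1/2)) {0, 1} - CMIM w (bin_dist (1/2)) (BEC \<beta>) {0, 1} {0, 1, 2}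
           = (1 - \<beta>) * (exp (w / 2) - 1)"
proof -
  have uniform: "is_dist (bin_dist (1/2)) {0, 1}"
    by (rule is_dist_bin_dist) simp_all
  have "MIM w (bin_dist (1/2)) {0, 1} = exp (w / 2)"
    by (simp add: MIM_def bin_dist_def)
  then show ?thesis
    using importance_loss_BEC[OF assms uniform, where w = w] by simp
qed

theorem proposition2:
  fixes w \<beta> :: real
  assumes "0 < w" and "w < 2" and "0 \<le> \<beta>" and "\<beta> \<le> 1"
  shows "(\<forall>p\<in>{0..1}. MIM w (bin_dist p) {0,1} - CMIM w (bin_dist p) (BEC \<beta>) {0,1} {0,1,2}
              \<le> (1 - \<beta>) * (exp (w / 2) - 1))
       \<and> MIM w (bin_dist (1/2)) {0,1} - CMIM w (bin_dist (1/2)) (BEC \<beta>) {0,1} {0,1,2}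
              = (1 - \<beta>) * (exp (w / 2) - 1)
       \<and> MILC w (BEC \<beta>) {0,1} {0,1,2} = (1 - \<beta>) * (exp (w / 2) - 1)"
proof -
  note upper = importance_loss_BEC_le[of w \<beta>]
  have "MILC w (BEC \<beta>) {0,1} {0,1,2} = (1 - \<beta>) * (exp (w / 2) - 1)"
    unfolding MILC_def
  proof (rule cSup_eq_maximum)
    show "(1 - \<beta>) * (exp (w / 2) - 1)
            \<in> {MIM w px {0,1} - CMIM w px (BEC \<beta>) {0,1} {0,1,2} | px. is_dist px {0,1}}"
      using importance_loss_BEC_uniform[OF assms(3,4)] is_dist_bin_dist[of "1/2"]
      by (intro CollectI exI[of _ "bin_dist (1/2)"]) simp
  qed (use upper assms in auto)
  then show ?thesis
    using upper is_dist_bin_dist importance_loss_BEC_uniform assms by auto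
qed

end
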